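(* Let $(\mathcal{C},P)$ be a doctrine satisfying AC, such that $\mathcal{C}$ has a stable initial object $0$ and every poset $P(A)$ is non-empty. Then every arrow $k:X\to 0$ in $\mathcal{C}$ is an isomorphism.
   Context: A doctrine is a pair $(\mathcal{C},P)$, $\mathcal{C}$ a category with finite products (terminal object $1$), $P:\mathcal{C}^{op}\to\mathbf{Pos}$ a functor, $f^*=P(f)$. An object $0$ is a stable initial object if it is initial and $X\times0\cong0$ for every $X$. $(\mathcal{C},P)$ satisfies the axiom of choice (AC) if for every object $A$ which is not a stable initial object and every object $\Gamma$, the functor $\pi_\Gamma^*$ (for the projection $\pi_\Gamma:\Gamma\times A\to\Gamma$) has a left adjoint $\Sigma_{\pi_\Gamma}$ (i.e. $\psi\le\pi_\Gamma^*\Sigma_{\pi_\Gamma}\psi$ and $\Sigma_{\pi_\Gamma}\pi_\Gamma^*\beta\le\beta$) and for every $\psi\in P(\Gamma\times A)$ there is an arrow $\epsilon_\psi:\Gamma\to A$ with $\Sigma_{\pi_\Gamma}\psi=\langle id_\Gamma,\epsilon_\psi\rangle^*\psi$. *)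

theory Defs
  imports Main
begin

text \<open>Categories are given concretely by a set of objects, a set of arrows,
domain, codomain, identities and composition ("cmp g f" is g after f).\<close>

record ('o, 'a) category =
  Obj :: "'o set"
  Arr :: "'a set"
  Dom :: "'a \<Rightarrow> 'o"
  Cod :: "'a \<Rightarrow> 'o"
  ident :: "'o \<Rightarrow> 'a"
  cmp :: "'a \<Rightarrow> 'a \<Rightarrow> 'a"

definition hom :: "('o, 'a) category \<Rightarrow> 'o \<Rightarrow> 'o \<Rightarrow> 'a set" where
  "hom C X Y = {f \<in> Arr C. Dom C f = X \<and> Cod C f = Y}"

definition is_category :: "('o, 'a) category \<Rightarrow> bool" where
  "is_category C \<longleftrightarrow>
     (\<forall>f \<in> Arr C. Dom C f \<in> Obj C \<and> Cod C f \<in> Obj C) \<and>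
     (\<forall>X \<in> Obj C. ident C X \<in> hom C X X) \<and>
     (\<forall>f \<in> Arr C. \<forall>g \<in> Arr C. Cod C f = Dom C g \<longrightarrow>
         cmp C g f \<in> hom C (Dom C f) (Cod C g)) \<and>
     (\<forall>f \<in> Arr C. cmp C (ident C (Cod C f)) f = f \<and> cmp C f (ident C (Dom C f)) = f) \<and>
     (\<forall>f \<in> Arr C. \<forall>g \<in> Arr C. \<forall>h \<in> Arr C. Cod C f = Dom C g \<longrightarrow> Cod C g = Dom C h \<longrightarrow>
         cmp C h (cmp C g f) = cmp C (cmp C h g) f)"

definition is_terminal :: "('o, 'a) category \<Rightarrow> 'o \<Rightarrow> bool" where
  "is_terminal C T \<longleftrightarrow> T \<in> Obj C \<and> (\<forall>X \<in> Obj C. \<exists>!f. f \<in> hom C X T)"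

definition is_initial :: "('o, 'a) category \<Rightarrow> 'o \<Rightarrow> bool" where
  "is_initial C Z \<longleftrightarrow> Z \<in> Obj C \<and> (\<forall>X \<in> Obj C. \<exists>!f. f \<in> hom C Z X)"

definition is_product :: "('o, 'a) category \<Rightarrow> 'o \<Rightarrow> 'o \<Rightarrow> 'o \<Rightarrow> 'a \<Rightarrow> 'a \<Rightarrow> bool" where
  "is_product C A B Q p1 p2 \<longleftrightarrow>
     Q \<in> Obj C \<and> p1 \<in> hom C Q A \<and> p2 \<in> hom C Q B \<and>
     (\<forall>X \<in> Obj C. \<forall>f \<in> hom C X A. \<forall>g \<in> hom C X B.
        \<exists>!h. h \<in> hom C X Q \<and> cmp C p1 h = f \<and> cmp C p2 h = g)"

definition has_finite_products :: "('o, 'a) category \<Rightarrow> bool" where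
  "has_finite_products C \<longleftrightarrow>
     (\<exists>T. is_terminal C T) \<and>
     (\<forall>A \<in> Obj C. \<forall>B \<in> Obj C. \<exists>Q p1 p2. is_product C A B Q p1 p2)"

definition iso :: "('o, 'a) category \<Rightarrow> 'a \<Rightarrow> bool" where
  "iso C f \<longleftrightarrow> f \<in> Arr C \<and>
     (\<exists>g \<in> hom C (Cod C f) (Dom C f).
        cmp C g f = ident C (Dom C f) \<and> cmp C f g = ident C (Cod C f))"

definition isomorphic :: "('o, 'a) category \<Rightarrow> 'o \<Rightarrow> 'o \<Rightarrow> bool" where
  "isomorphic C X Y \<longleftrightarrow> (\<exists>f \<in> hom C X Y. iso C f)"

definition stable_initial :: "('o, 'a) category \<Rightarrow> 'o \<Rightarrow> bool" where
  "stable_initial C Z \<longleftrightarrow> is_initial C Z \<and>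
     (\<forall>X \<in> Obj C. \<forall>Q p1 p2. is_product C X Z Q p1 p2 \<longrightarrow> isomorphic C Q Z)"

text \<open>A doctrine (C, P): P(A) is the poset (PC A, Le A); the functor action
  on an arrow f is R f = f^*, mapping P(Cod f) to P(Dom f).\<close>
definition doctrine ::
  "('o, 'a) category \<Rightarrow> ('o \<Rightarrow> 'p set) \<Rightarrow> ('o \<Rightarrow> 'p \<Rightarrow> 'p \<Rightarrow> bool) \<Rightarrow> ('a \<Rightarrow> 'p \<Rightarrow> 'p) \<Rightarrow> bool"
where
  "doctrine C PC Le R \<longleftrightarrow>
     is_category C \<and> has_finite_products C \<and>
     (\<forall>A \<in> Obj C.
        (\<forall>x \<in> PC A. Le A x x) \<and>
        (\<forall>x \<in> PC A. \<forall>y \<in> PC A. \<forall>z \<in> PC A. Le A x y \<longrightarrow> Le A y z \<longrightarrow> Le A x z) \<and>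
        (\<forall>x \<in> PC A. \<forall>y \<in> PC A. Le A x y \<longrightarrow> Le A y x \<longrightarrow> x = y)) \<and>
     (\<forall>f \<in> Arr C. \<forall>x \<in> PC (Cod C f). R f x \<in> PC (Dom C f)) \<and>
     (\<forall>f \<in> Arr C. \<forall>x \<in> PC (Cod C f). \<forall>y \<in> PC (Cod C f).
        Le (Cod C f) x y \<longrightarrow> Le (Dom C f) (R f x) (R f y)) \<and>
     (\<forall>A \<in> Obj C. \<forall>x \<in> PC A. R (ident C A) x = x) \<and>
     (\<forall>f \<in> Arr C. \<forall>g \<in> Arr C. Cod C f = Dom C g \<longrightarrow>
        (\<forall>x \<in> PC (Cod C g). R (cmp C g f) x = R f (R g x)))"

text \<open>Axiom of choice: for every A which is not a stable initial object, every
  object \<Gamma>, and every product (Q, p1, p2) of \<Gamma> and A (so p1 = \<pi>_\<Gamma>), p1^* has a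
  left adjoint S (a monotone map with unit and counit inequalities), and for every
  \<psi> there is \<epsilon> : \<Gamma> \<rightarrow> A with S \<psi> = \<langle>id, \<epsilon>\<rangle>^* \<psi>.\<close>
definition satisfies_AC ::
  "('o, 'a) category \<Rightarrow> ('o \<Rightarrow> 'p set) \<Rightarrow> ('o \<Rightarrow> 'p \<Rightarrow> 'p \<Rightarrow> bool) \<Rightarrow> ('a \<Rightarrow> 'p \<Rightarrow> 'p) \<Rightarrow> bool"
where
  "satisfies_AC C PC Le R \<longleftrightarrow>
     (\<forall>A \<in> Obj C. \<not> stable_initial C A \<longrightarrow>
       (\<forall>G \<in> Obj C. \<forall>Q p1 p2. is_product C G A Q p1 p2 \<longrightarrow>
         (\<exists>S. (\<forall>\<psi> \<in> PC Q. S \<psi> \<in> PC G) \<and>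
              (\<forall>\<psi> \<in> PC Q. \<forall>\<phi> \<in> PC Q. Le Q \<psi> \<phi> \<longrightarrow> Le G (S \<psi>) (S \<phi>)) \<and>
              (\<forall>\<psi> \<in> PC Q. Le Q \<psi> (R p1 (S \<psi>))) \<and>
              (\<forall>\<beta> \<in> PC G. Le G (S (R p1 \<beta>)) \<beta>) \<and>
              (\<forall>\<psi> \<in> PC Q. \<exists>\<epsilon> \<in> hom C G A. \<exists>h \<in> hom C G Q.
                  cmp C p1 h = ident C G \<and> cmp C p2 h = \<epsilon> \<and> S \<psi> = R h \<psi>))))"

end

theory Submission
  imports Defs
begin

text \<open>Stable initial objects are strict, already in any category with binary products:
  for k : X \<rightarrow> 0 the pairing \<langle>id, k\<rangle> : X \<rightarrow> X \<times> 0 exhibits X as a retract of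
  X \<times> 0 \<cong> 0, and a retract of an initial object is initial. An arrow between initial
  objects is an isomorphism.\<close>

lemma hom_iff: "f \<in> hom C X Y \<longleftrightarrow> f \<in> Arr C \<and> Dom C f = X \<and> Cod C f = Y"
  by (simp add: hom_def)

lemma cmp_in_hom:
  assumes "is_category C" "f \<in> hom C X Y" "g \<in> hom C Y W"
  shows "cmp C g f \<in> hom C X W"
  using assms unfolding is_category_def hom_iff by metis

lemma ident_in_hom: "is_category C \<Longrightarrow> X \<in> Obj C \<Longrightarrow> ident C X \<in> hom C X X"
  unfolding is_category_def by blast

lemma cmp_ident_right: "is_category C \<Longrightarrow> f \<in> hom C X Y \<Longrightarrow> cmp C f (ident C X) = f"
  unfolding is_category_def hom_iff by metis

lemma cmp_assoc:
  assumes "is_category C" "f \<in> hom C X Y" "g \<in> hom C Y W" "h \<in> hom C W V"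
  shows "cmp C h (cmp C g f) = cmp C (cmp C h g) f"
  using assms unfolding is_category_def hom_iff by metis

lemma initial_hom_unique:
  "is_initial C Z \<Longrightarrow> Y \<in> Obj C \<Longrightarrow> a \<in> hom C Z Y \<Longrightarrow> b \<in> hom C Z Y \<Longrightarrow> a = b"
  unfolding is_initial_def by blast

lemma retract_of_initial_is_initial:
  assumes cat: "is_category C" and X: "X \<in> Obj C" and Qi: "is_initial C Q"
    and s: "s \<in> hom C X Q" and r: "r \<in> hom C Q X" and rs: "cmp C r s = ident C X"
  shows "is_initial C X"
  unfolding is_initial_def
proof (intro conjI ballI X)
  fix Y assume Y: "Y \<in> Obj C"
  from Qi Y obtain u where u: "u \<in> hom C Q Y" unfolding is_initial_def by blast
  have "a = cmp C u s" if a: "a \<in> hom C X Y" for a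
  proof -
    have "a = cmp C a (cmp C r s)" using cmp_ident_right[OF cat a] rs by simp
    also have "\<dots> = cmp C (cmp C a r) s" using cmp_assoc[OF cat s r a] .
    also have "cmp C a r = u"
      using initial_hom_unique[OF Qi Y cmp_in_hom[OF cat r a] u] .
    finally show ?thesis .
  qed
  with cmp_in_hom[OF cat s u] show "\<exists>!f. f \<in> hom C X Y" by blast
qed

lemma iso_to_initial_is_initial:
  assumes cat: "is_category C" and Q: "Q \<in> Obj C" and Zi: "is_initial C Z"
    and f: "f \<in> hom C Q Z" and "iso C f"
  shows "is_initial C Q"
proof -
  from \<open>iso C f\<close> f obtain g where "g \<in> hom C Z Q" "cmp C g f = ident C Q"
    unfolding iso_def by (auto simp: hom_iff)
  then show ?thesis using retract_of_initial_is_initial[OF cat Q Zi f] by blast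
qed

lemma hom_between_initials_iso:
  assumes cat: "is_category C" and Xi: "is_initial C X" and Zi: "is_initial C Z"
    and k: "k \<in> hom C X Z"
  shows "iso C k"
proof -
  have X: "X \<in> Obj C" and Z: "Z \<in> Obj C" using Xi Zi unfolding is_initial_def by auto
  from Zi X obtain g where g: "g \<in> hom C Z X" unfolding is_initial_def by blast
  have "cmp C g k = ident C X"
    using initial_hom_unique[OF Xi X cmp_in_hom[OF cat k g] ident_in_hom[OF cat X]] .
  moreover have "cmp C k g = ident C Z"
    using initial_hom_unique[OF Zi Z cmp_in_hom[OF cat g k] ident_in_hom[OF cat Z]] .
  ultimately show ?thesis using k g unfolding iso_def by (auto simp: hom_iff)
qed

lemma stable_initial_strict:
  assumes cat: "is_category C" and Zs: "stable_initial C Z"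
    and X: "X \<in> Obj C" and pr: "is_product C X Z Q p1 p2" and k: "k \<in> hom C X Z"
  shows "iso C k"
proof -
  have Zi: "is_initial C Z" using Zs unfolding stable_initial_def by blast
  have Q: "Q \<in> Obj C" and p1: "p1 \<in> hom C Q X" using pr unfolding is_product_def by auto
  obtain f where "f \<in> hom C Q Z" "iso C f"
    using Zs X pr unfolding stable_initial_def isomorphic_def by blast
  then have Qi: "is_initial C Q" using iso_to_initial_is_initial[OF cat Q Zi] by blast
  obtain h where "h \<in> hom C X Q" "cmp C p1 h = ident C X"
    using pr X ident_in_hom[OF cat X] k unfolding is_product_def by blast
  then have "is_initial C X" using retract_of_initial_is_initial[OF cat X Qi _ p1] by blast
  then show ?thesis using hom_between_initials_iso[OF cat _ Zi k] by blast
qed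

theorem mainTheorem5:
  fixes C :: "('o, 'a) category"
    and PC :: "'o \<Rightarrow> 'p set"
    and Le :: "'o \<Rightarrow> 'p \<Rightarrow> 'p \<Rightarrow> bool"
    and R :: "'a \<Rightarrow> 'p \<Rightarrow> 'p"
    and Z :: 'o
  assumes "doctrine C PC Le R"
    and "satisfies_AC C PC Le R"
    and "stable_initial C Z"
    and "\<forall>A \<in> Obj C. PC A \<noteq> {}"
  shows "\<forall>X \<in> Obj C. \<forall>k \<in> hom C X Z. iso C k"
proof (intro ballI)
  fix X k assume X: "X \<in> Obj C" and k: "k \<in> hom C X Z"
  have cat: "is_category C" and fp: "has_finite_products C"
    using assms(1) unfolding doctrine_def by auto
  have "Z \<in> Obj C" using assms(3) unfolding stable_initial_def is_initial_def by blast
  then obtain Q p1 p2 where "is_product C X Z Q p1 p2"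
    using fp X unfolding has_finite_products_def by blast
  then show "iso C k" using stable_initial_strict[OF cat assms(3) X _ k] by blast
qed

end
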